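(* Every $d$-dimensional perfect lattice $\Lambda$ has a $\mathbb Z$-basis $f_1,\dots,f_d$ such that every minimal vector $v=\sum_{i=1}^d\beta_if_i$ of $\Lambda$ (with $\beta_i\in\mathbb Z$) satisfies $|\beta_i|\le2^{i-1}I_d$ for $i=1,\dots,d$.
   Context: Minimal vectors are the nonzero vectors of minimal length. A $d$-dimensional lattice is perfect if $\{v\otimes v\}$, $v$ ranging over its minimal vectors, spans the $\binom{d+1}{2}$-dimensional space of symmetric tensors in $(\Lambda\otimes\mathbb R)^{\otimes2}$. A lattice is well-rounded if its minimal vectors span $\Lambda\otimes\mathbb R$. $I_d$ is the smallest integer such that whenever $\Lambda$ is a $d$-dimensional lattice and $\Lambda'\subseteq\Lambda$ is a $d$-dimensional well-rounded sublattice whose minimal vectors are all minimal vectors of $\Lambda$, the index $[\Lambda:\Lambda']$ is at most $I_d$. *)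

theory Defs
  imports "HOL-Analysis.Analysis"
begin

text \<open>Lattices in R^d are modelled as subsets of real^'n with d = CARD('n).
  Bases are indexed by 0..<d (index i here corresponds to f_(i+1) in the paper).\<close>

definition Zspan :: "(nat \<Rightarrow> real^'n) \<Rightarrow> nat \<Rightarrow> (real^'n) set" where
  "Zspan f d = {\<Sum>i<d. of_int (c i) *\<^sub>R f i | c. True}"

definition is_lattice_basis :: "(real^'n) set \<Rightarrow> (nat \<Rightarrow> real^'n) \<Rightarrow> bool" where
  "is_lattice_basis L f \<longleftrightarrow>
     inj_on f {..<CARD('n)} \<and> independent (f ` {..<CARD('n)}) \<and> L = Zspan f CARD('n)"

definition is_lattice :: "(real^'n) set \<Rightarrow> bool" where
  "is_lattice L \<longleftrightarrow> (\<exists>f. is_lattice_basis L f)"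

definition minvecs :: "(real^'n) set \<Rightarrow> (real^'n) set" where
  "minvecs L = {v \<in> L. v \<noteq> 0 \<and> (\<forall>w\<in>L. w \<noteq> 0 \<longrightarrow> norm v \<le> norm w)}"

definition outer :: "real^'n \<Rightarrow> real^'n^'n" where
  "outer v = (\<chi> i j. v $ i * v $ j)"

definition perfect :: "(real^'n) set \<Rightarrow> bool" where
  "perfect L \<longleftrightarrow> span (outer ` minvecs L) = {A :: real^'n^'n. transpose A = A}"

definition well_rounded :: "(real^'n) set \<Rightarrow> bool" where
  "well_rounded L \<longleftrightarrow> span (minvecs L) = UNIV"

definition lattice_index :: "(real^'n) set \<Rightarrow> (real^'n) set \<Rightarrow> nat" where
  "lattice_index L L' = card ((\<lambda>x. (\<lambda>y. x + y) ` L') ` L)"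

definition I_dim :: "'n::finite itself \<Rightarrow> nat" where
  "I_dim _ = (LEAST N. \<forall>(L :: (real^'n) set) L'.
      is_lattice L \<and> is_lattice L' \<and> L' \<subseteq> L \<and> well_rounded L' \<and> minvecs L' \<subseteq> minvecs L
      \<longrightarrow> lattice_index L L' \<le> N)"

end

theory Submission
  imports Defs
begin

text \<open>
  A perfect lattice is well-rounded, so among \<open>d\<close>-tuples of minimal vectors there is one,
  \<open>w\<^sub>1, \<dots>, w\<^sub>d\<close>, of maximal \<open>|det|\<close>; by Cramer's rule every minimal vector has coordinates of
  absolute value at most 1 with respect to it. The sublattice \<open>M\<close> spanned by the \<open>w\<^sub>i\<close> is well-rounded
  and its minimal vectors are minimal in \<open>\<Lambda>\<close>, so \<open>[\<Lambda> : M] \<le> I\<^sub>d\<close>. Now take the Hermite-type basis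
  \<open>f\<^sub>1, \<dots>, f\<^sub>d\<close> of \<open>\<Lambda>\<close>, triangular with respect to the \<open>w\<^sub>i\<close>, with diagonal coordinates \<open>1/n\<^sub>j\<close>
  (\<open>n\<^sub>j\<close> a positive integer) and coordinates in \<open>[0, 1)\<close> above the diagonal; the cosets of \<open>M\<close> show
  \<open>n\<^sub>1 \<cdots> n\<^sub>d \<le> [\<Lambda> : M]\<close>. For a minimal vector \<open>\<Sum> \<beta>\<^sub>k f\<^sub>k\<close>, comparing \<open>j\<close>-th coordinates gives
  \<open>|\<beta>\<^sub>j| \<le> n\<^sub>j (1 + \<Sum>\<^sub>k\<^sub><\<^sub>j |\<beta>\<^sub>k|)\<close>, hence \<open>|\<beta>\<^sub>j| \<le> 2\<^sup>j\<^sup>-\<^sup>1 n\<^sub>1 \<cdots> n\<^sub>j \<le> 2\<^sup>j\<^sup>-\<^sup>1 I\<^sub>d\<close> by induction.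
\<close>

section \<open>Integer spans and coordinates\<close>

lemma mem_Zspan_iff: "x \<in> Zspan f d \<longleftrightarrow> (\<exists>c. x = (\<Sum>i<d. of_int (c i) *\<^sub>R f i))"
  by (auto simp: Zspan_def)

lemma Zspan_zero: "0 \<in> Zspan f d"
  unfolding mem_Zspan_iff by (rule exI[of _ "\<lambda>_. 0"]) simp

lemma Zspan_add:
  assumes "x \<in> Zspan f d" "y \<in> Zspan f d"
  shows "x + y \<in> Zspan f d"
proof -
  from assms obtain c c' where "x = (\<Sum>i<d. of_int (c i) *\<^sub>R f i)" "y = (\<Sum>i<d. of_int (c' i) *\<^sub>R f i)"
    by (auto simp: mem_Zspan_iff)
  then have "x + y = (\<Sum>i<d. of_int (c i + c' i) *\<^sub>R f i)"
    by (simp add: sum.distrib scaleR_add_left)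
  then show ?thesis unfolding mem_Zspan_iff by (intro exI[of _ "\<lambda>i. c i + c' i"])
qed

lemma Zspan_scaleR_of_int:
  assumes "x \<in> Zspan f d"
  shows "of_int z *\<^sub>R x \<in> Zspan f d"
proof -
  from assms obtain c where "x = (\<Sum>i<d. of_int (c i) *\<^sub>R f i)"
    by (auto simp: mem_Zspan_iff)
  then have "of_int z *\<^sub>R x = (\<Sum>i<d. of_int (z * c i) *\<^sub>R f i)"
    by (simp add: scaleR_sum_right)
  then show ?thesis unfolding mem_Zspan_iff by (intro exI[of _ "\<lambda>i. z * c i"])
qed

lemma Zspan_uminus: "x \<in> Zspan f d \<Longrightarrow> - x \<in> Zspan f d"
  using Zspan_scaleR_of_int[of x f d "-1"] by simp

lemma Zspan_diff: "x \<in> Zspan f d \<Longrightarrow> y \<in> Zspan f d \<Longrightarrow> x - y \<in> Zspan f d"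
  using Zspan_add[of x f d "- y"] Zspan_uminus[of y f d] by simp

lemma Zspan_sum:
  assumes "finite A" "\<And>k. k \<in> A \<Longrightarrow> y k \<in> Zspan f d"
  shows "(\<Sum>k\<in>A. of_int (z k) *\<^sub>R y k) \<in> Zspan f d"
  using assms by (induction A rule: finite_induct) (auto intro: Zspan_add Zspan_scaleR_of_int Zspan_zero)

lemma Zspan_generator:
  assumes "i < d"
  shows "f i \<in> Zspan f d"
proof -
  have "(\<Sum>j<d. of_int (if j = i then 1 else 0) *\<^sub>R f j) = (\<Sum>j<d. if j = i then f j else 0)"
    by (rule sum.cong) auto
  also have "\<dots> = f i" using assms by (simp add: sum.delta)
  finally show ?thesis
    unfolding mem_Zspan_iff by (intro exI[of _ "\<lambda>j. if j = i then 1 else 0"]) simp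
qed

lemma Zspan_subset:
  assumes "\<And>k. k < d \<Longrightarrow> y k \<in> Zspan f d'"
  shows "Zspan y d \<subseteq> Zspan f d'"
  using Zspan_sum[of "{..<d}" y f d'] assms by (auto simp: mem_Zspan_iff)

lemma Zspan_subset_span: "Zspan u d \<subseteq> span (u ` {..<d})"
proof
  fix x assume "x \<in> Zspan u d"
  then obtain c where x: "x = (\<Sum>i<d. of_int (c i) *\<^sub>R u i)" unfolding mem_Zspan_iff by blast
  show "x \<in> span (u ` {..<d})" unfolding x
    by (intro span_sum span_scale span_base) auto
qed

lemma Zspan_coset_eq_iff:
  "(\<lambda>z. x + z) ` Zspan b d = (\<lambda>z. y + z) ` Zspan b d \<longleftrightarrow> x - y \<in> Zspan b d"
proof
  assume "(\<lambda>z. x + z) ` Zspan b d = (\<lambda>z. y + z) ` Zspan b d"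
  then have "x + 0 \<in> (\<lambda>z. y + z) ` Zspan b d"
    using Zspan_zero by blast
  then show "x - y \<in> Zspan b d" by (auto simp: algebra_simps)
next
  have shift: "(\<lambda>z. a + z) ` Zspan b d \<subseteq> (\<lambda>z. c + z) ` Zspan b d" if "a - c \<in> Zspan b d" for a c
  proof
    fix p assume "p \<in> (\<lambda>z. a + z) ` Zspan b d"
    then obtain l where "l \<in> Zspan b d" "p = c + ((a - c) + l)" by auto
    then show "p \<in> (\<lambda>z. c + z) ` Zspan b d" using that Zspan_add by blast
  qed
  assume "x - y \<in> Zspan b d"
  moreover from this have "y - x \<in> Zspan b d" using Zspan_uminus by fastforce
  ultimately show "(\<lambda>z. x + z) ` Zspan b d = (\<lambda>z. y + z) ` Zspan b d"
    using shift by blast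
qed

definition indexed_basis :: "(nat \<Rightarrow> real^'n) \<Rightarrow> bool" where
  "indexed_basis u \<longleftrightarrow> inj_on u {..<CARD('n)} \<and> independent (u ` {..<CARD('n)})"

definition coord :: "(nat \<Rightarrow> real^'n) \<Rightarrow> real^'n \<Rightarrow> nat \<Rightarrow> real" where
  "coord u x l = representation (u ` {..<CARD('n)}) x (u l)"

lemma is_lattice_basis_iff:
  fixes L :: "(real^'n) set"
  shows "is_lattice_basis L f \<longleftrightarrow> indexed_basis f \<and> L = Zspan f CARD('n)"
  by (simp add: is_lattice_basis_def indexed_basis_def)

lemma indexed_basis_span:
  fixes u :: "nat \<Rightarrow> real^'n"
  assumes "indexed_basis u"
  shows "span (u ` {..<CARD('n)}) = UNIV"
proof -
  have "dim (u ` {..<CARD('n)}) = CARD('n)"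
    using assms by (simp add: indexed_basis_def dim_eq_card_independent card_image)
  then show ?thesis using dim_eq_full[of "u ` {..<CARD('n)}"] by simp
qed

lemma indexed_basis_iff_spanning:
  fixes u :: "nat \<Rightarrow> real^'n"
  shows "indexed_basis u \<longleftrightarrow> span (u ` {..<CARD('n)}) = UNIV"
proof
  let ?B = "u ` {..<CARD('n)}"
  assume sp: "span ?B = UNIV"
  have cB: "card ?B \<le> CARD('n)" using card_image_le[of "{..<CARD('n)}" u] by simp
  have ind: "independent ?B"
    by (rule card_le_dim_spanning[of ?B UNIV]) (use sp cB in auto)
  have "card ?B = CARD('n)"
    using dim_eq_card_independent[OF ind] sp dim_eq_full[of ?B] by simp
  then have "inj_on u {..<CARD('n)}" by (intro eq_card_imp_inj_on) auto
  then show "indexed_basis u" using ind unfolding indexed_basis_def by simp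
qed (rule indexed_basis_span)

lemma obtain_indexed_basis_in:
  fixes S :: "(real^'n) set"
  assumes "span S = UNIV"
  obtains u where "indexed_basis u" "\<And>i. i < CARD('n) \<Longrightarrow> u i \<in> S"
proof -
  obtain B where B: "B \<subseteq> S" "independent B" "S \<subseteq> span B" "card B = dim S"
    using basis_exists by blast
  have "card B = CARD('n)" using assms dim_eq_full[of S] B(4) by simp
  moreover have "finite B" using B(2) finiteI_independent by blast
  ultimately obtain h where h: "bij_betw h {..<CARD('n)} B"
    using ex_bij_betw_nat_finite[of B] by (auto simp: atLeast0LessThan)
  then have "indexed_basis h"
    unfolding indexed_basis_def using B(2) bij_betw_imp_inj_on bij_betw_imp_surj_on by metis
  moreover have "h i \<in> S" if "i < CARD('n)" for i
    using h that B(1) bij_betwE by blast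
  ultimately show ?thesis using that by blast
qed

context
  fixes u :: "nat \<Rightarrow> real^'n"
  assumes u: "indexed_basis u"
begin

lemma coord_expansion: "x = (\<Sum>l<CARD('n). coord u x l *\<^sub>R u l)"
proof -
  let ?B = "u ` {..<CARD('n)}"
  have "(\<Sum>b\<in>?B. representation ?B x b *\<^sub>R b) = x"
    using u by (intro sum_representation_eq) (auto simp: indexed_basis_def indexed_basis_span)
  moreover have "(\<Sum>b\<in>?B. representation ?B x b *\<^sub>R b) = (\<Sum>l<CARD('n). coord u x l *\<^sub>R u l)"
    using u by (subst sum.reindex) (auto simp: indexed_basis_def coord_def)
  ultimately show ?thesis by simp
qed

lemma coord_add: "coord u (x + y) l = coord u x l + coord u y l"
  using u by (simp add: coord_def representation_add indexed_basis_def indexed_basis_span)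

lemma coord_scaleR: "coord u (a *\<^sub>R x) l = a * coord u x l"
  using u by (simp add: coord_def representation_scale indexed_basis_def indexed_basis_span)

lemma coord_diff: "coord u (x - y) l = coord u x l - coord u y l"
  using u by (simp add: coord_def representation_diff indexed_basis_def indexed_basis_span)

lemma coord_sum: "coord u (\<Sum>k\<in>A. g k) l = (\<Sum>k\<in>A. coord u (g k) l)"
  using u by (simp add: coord_def representation_sum indexed_basis_def indexed_basis_span)

lemma coord_lincomb: "coord u (\<Sum>k\<in>A. a k *\<^sub>R g k) l = (\<Sum>k\<in>A. a k * coord u (g k) l)"
  by (simp add: coord_sum coord_scaleR)

lemma coord_basis:
  assumes "k < CARD('n)" "l < CARD('n)"
  shows "coord u (u k) l = (if l = k then 1 else 0)"
  using u assms by (auto simp: coord_def representation_basis indexed_basis_def inj_on_def)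

lemma coord_sum_basis:
  assumes "A \<subseteq> {..<CARD('n)}" "l < CARD('n)"
  shows "coord u (\<Sum>k\<in>A. a k *\<^sub>R u k) l = (if l \<in> A then a l else 0)"
proof -
  have "finite A" using assms(1) finite_subset by blast
  moreover have "(\<Sum>k\<in>A. a k * coord u (u k) l) = (\<Sum>k\<in>A. if l = k then a k else 0)"
    using assms by (intro sum.cong) (auto simp: coord_basis)
  ultimately show ?thesis by (simp add: coord_lincomb)
qed

lemma coord_of_int_lincomb:
  assumes "x = (\<Sum>i<CARD('n). of_int (c i) *\<^sub>R u i)" "l < CARD('n)"
  shows "coord u x l = of_int (c l)"
  using coord_sum_basis[of "{..<CARD('n)}" l "\<lambda>i. of_int (c i)"] assms by simp

lemma coord_Zspan_Ints:
  assumes "y \<in> Zspan u CARD('n)" "l < CARD('n)"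
  shows "coord u y l \<in> \<int>"
  using assms coord_of_int_lincomb by (auto simp: mem_Zspan_iff)

lemma coords_zero_imp_zero:
  assumes "\<And>l. l < CARD('n) \<Longrightarrow> coord u x l = 0"
  shows "x = 0"
  using coord_expansion[of x] assms by simp

lemma linear_coord: "linear (\<lambda>x. coord u x l)"
  by (rule linearI) (simp_all add: coord_add coord_scaleR)

lemma coord_floor_decomposition:
  "x - (\<Sum>i<CARD('n). of_int \<lfloor>coord u x i\<rfloor> *\<^sub>R u i) = (\<Sum>i<CARD('n). frac (coord u x i) *\<^sub>R u i)"
proof -
  have "x - (\<Sum>i<CARD('n). of_int \<lfloor>coord u x i\<rfloor> *\<^sub>R u i)
      = (\<Sum>i<CARD('n). coord u x i *\<^sub>R u i - of_int \<lfloor>coord u x i\<rfloor> *\<^sub>R u i)"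
    by (subst coord_expansion[of x]) (simp add: sum_subtractf)
  also have "\<dots> = (\<Sum>i<CARD('n). frac (coord u x i) *\<^sub>R u i)"
    by (simp add: frac_def scaleR_diff_left)
  finally show ?thesis .
qed

end


section \<open>Minimal vectors\<close>

lemma minvecs_norm_le: "v \<in> minvecs L \<Longrightarrow> x \<in> L \<Longrightarrow> x \<noteq> 0 \<Longrightarrow> norm v \<le> norm x"
  by (simp add: minvecs_def)

lemma minvecs_norm_eq: "v \<in> minvecs L \<Longrightarrow> w \<in> minvecs L \<Longrightarrow> norm v = norm w"
  unfolding minvecs_def by (auto intro: order.antisym)

lemma shorter_than_minvec_eq_0:
  assumes "v \<in> minvecs L" "z \<in> L" "norm z < norm v"
  shows "z = 0"
  using assms minvecs_norm_le[of v L z] by fastforce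

lemma perfect_imp_well_rounded:
  fixes L :: "(real^'n) set"
  assumes "perfect L"
  shows "well_rounded L"
  unfolding well_rounded_def
proof (rule ccontr)
  assume "span (minvecs L) \<noteq> UNIV"
  then have "dim (minvecs L) < DIM(real^'n)"
    using dim_eq_full[of "minvecs L"] dim_subset_UNIV[of "minvecs L"] by linarith
  then obtain a :: "real^'n" where a: "a \<noteq> 0" "\<And>y. y \<in> span (minvecs L) \<Longrightarrow> orthogonal a y"
    using orthogonal_to_subspace_exists[of "minvecs L"] by blast
  \<comment> \<open>The linear form \<open>A \<mapsto> a\<^sup>T A a\<close> kills every \<open>outer v\<close>, \<open>v\<close> minimal, but not \<open>outer a\<close>.\<close>
  define \<Phi> where "\<Phi> A = (\<Sum>i\<in>UNIV. \<Sum>j\<in>UNIV. a$i * a$j * (A::real^'n^'n)$i$j)" for A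
  have \<Phi>_outer: "\<Phi> (outer v) = (a \<bullet> v)\<^sup>2" for v
  proof -
    have "(a \<bullet> v)\<^sup>2 = (\<Sum>i\<in>UNIV. a$i * v$i) * (\<Sum>j\<in>UNIV. a$j * v$j)"
      by (simp add: inner_vec_def power2_eq_square)
    also have "\<dots> = \<Phi> (outer v)"
      unfolding sum_product \<Phi>_def outer_def by (simp add: algebra_simps)
    finally show ?thesis by simp
  qed
  have "subspace {A. \<Phi> A = 0}"
    unfolding subspace_def \<Phi>_def
    by (simp add: algebra_simps sum.distrib sum_distrib_left[symmetric])
  moreover have "outer ` minvecs L \<subseteq> {A. \<Phi> A = 0}"
    using a(2) span_base[of _ "minvecs L"] by (auto simp: \<Phi>_outer orthogonal_def)
  ultimately have "span (outer ` minvecs L) \<subseteq> {A. \<Phi> A = 0}"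
    using span_minimal by blast
  moreover have "outer a \<in> span (outer ` minvecs L)"
    using assms unfolding perfect_def by (simp add: outer_def transpose_def vec_eq_iff mult.commute)
  ultimately have "(a \<bullet> a)\<^sup>2 = 0" by (auto simp: \<Phi>_outer)
  then show False using a(1) by simp
qed

lemma finite_Zspan_cball:
  fixes g :: "nat \<Rightarrow> real^'n"
  assumes g: "indexed_basis g"
  shows "finite {x \<in> Zspan g CARD('n). norm x \<le> R}"
proof -
  obtain B where B: "\<And>l x. norm (coord g x l) \<le> B l * norm x"
    using linear_bounded[OF linear_coord[OF g]] by metis
  define M where "M = \<lceil>(\<Sum>l<CARD('n). \<bar>B l\<bar>) * \<bar>R\<bar>\<rceil>"
  have "{x \<in> Zspan g CARD('n). norm x \<le> R} \<subseteq>
      (\<lambda>c. \<Sum>i<CARD('n). of_int (c i) *\<^sub>R g i) ` (PiE {..<CARD('n)} (\<lambda>_. {-M..M}))"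
  proof
    fix x assume x: "x \<in> {x \<in> Zspan g CARD('n). norm x \<le> R}"
    then obtain c where c: "x = (\<Sum>i<CARD('n). of_int (c i) *\<^sub>R g i)" by (auto simp: mem_Zspan_iff)
    have "\<bar>c i\<bar> \<le> M" if i: "i < CARD('n)" for i
    proof -
      have "\<bar>of_int (c i)\<bar> = norm (coord g x i)" using coord_of_int_lincomb[OF g c i] by simp
      also have "\<dots> \<le> B i * norm x" by (rule B)
      also have "\<dots> \<le> \<bar>B i\<bar> * \<bar>R\<bar>"
        using x by (intro mult_mono) auto
      also have "\<dots> \<le> (\<Sum>l<CARD('n). \<bar>B l\<bar>) * \<bar>R\<bar>"
        using i by (intro mult_right_mono member_le_sum) auto
      finally show ?thesis unfolding M_def by linarith
    qed
    then have "restrict c {..<CARD('n)} \<in> PiE {..<CARD('n)} (\<lambda>_. {-M..M})"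
      by (auto simp: abs_le_iff minus_le_iff)
    moreover have "x = (\<Sum>i<CARD('n). of_int (restrict c {..<CARD('n)} i) *\<^sub>R g i)" using c by simp
    ultimately show "x \<in> (\<lambda>c. \<Sum>i<CARD('n). of_int (c i) *\<^sub>R g i) ` (PiE {..<CARD('n)} (\<lambda>_. {-M..M}))"
      by blast
  qed
  then show ?thesis by (rule finite_subset) (auto intro: finite_PiE)
qed

lemma finite_minvecs:
  fixes g :: "nat \<Rightarrow> real^'n"
  assumes "indexed_basis g" "L = Zspan g CARD('n)"
  shows "finite (minvecs L)"
proof (cases "minvecs L = {}")
  case False
  then obtain m where m: "m \<in> minvecs L" by blast
  have "minvecs L \<subseteq> {x \<in> Zspan g CARD('n). norm x \<le> norm m}"
    using minvecs_norm_eq[OF _ m] assms(2) by (auto simp: minvecs_def)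
  then show ?thesis using finite_Zspan_cball[OF assms(1)] finite_subset by blast
qed simp


section \<open>Finiteness of the index and the constant \<open>I_dim\<close>\<close>

lemma card_image_le_if_factors:
  assumes "finite P" "g ` A \<subseteq> P" "\<And>x y. x \<in> A \<Longrightarrow> y \<in> A \<Longrightarrow> g x = g y \<Longrightarrow> h x = h y"
  shows "finite (h ` A) \<and> card (h ` A) \<le> card P"
proof -
  define r where "r p = h (SOME x. x \<in> A \<and> g x = p)" for p
  have "h ` A \<subseteq> r ` P"
  proof
    fix y assume "y \<in> h ` A"
    then obtain x where x: "x \<in> A" "y = h x" by blast
    define x' where "x' = (SOME x'. x' \<in> A \<and> g x' = g x)"
    have "x' \<in> A \<and> g x' = g x"
      unfolding x'_def by (rule someI[of _ x]) (use x in simp)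
    then have "h x' = h x" using assms(3)[of x' x] x(1) by blast
    then have "y = r (g x)" unfolding r_def x'_def[symmetric] using x(2) by simp
    then show "y \<in> r ` P" using assms(2) x by blast
  qed
  moreover have "finite (r ` P)" using assms(1) by simp
  moreover have "card (r ` P) \<le> card P" using assms(1) by (rule card_image_le)
  ultimately show ?thesis by (meson card_mono finite_subset order_trans)
qed

lemma norm_lincomb_le:
  assumes "\<And>i. i \<in> A \<Longrightarrow> norm (u i) = c"
  shows "norm (\<Sum>i\<in>A. a i *\<^sub>R u i) \<le> (\<Sum>i\<in>A. \<bar>a i\<bar>) * c"
proof -
  have "norm (\<Sum>i\<in>A. a i *\<^sub>R u i) \<le> (\<Sum>i\<in>A. norm (a i *\<^sub>R u i))"
    by (rule norm_sum)
  also have "\<dots> = (\<Sum>i\<in>A. \<bar>a i\<bar> * c)"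
    using assms by (intro sum.cong) auto
  finally show ?thesis by (simp add: sum_distrib_right)
qed

lemma nat_floor_scaled_eq_imp_dist:
  fixes a b D :: real
  assumes "0 < D" "0 \<le> a" "0 \<le> b" "nat \<lfloor>D * a\<rfloor> = nat \<lfloor>D * b\<rfloor>"
  shows "\<bar>a - b\<bar> < 1 / D"
proof -
  have "0 \<le> \<lfloor>D * a\<rfloor>" "0 \<le> \<lfloor>D * b\<rfloor>" using assms by simp_all
  then have "\<lfloor>D * a\<rfloor> = \<lfloor>D * b\<rfloor>" using assms(4) by (metis eq_nat_nat_iff)
  then have "\<bar>D * a - D * b\<bar> < 1" by linarith
  then have "D * \<bar>a - b\<bar> < 1" using assms(1) by (simp add: abs_mult flip: right_diff_distrib)
  then show ?thesis using assms(1) by (simp add: field_simps)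
qed

lemma nat_floor_mult_frac_less:
  assumes "0 < D"
  shows "nat \<lfloor>real D * frac t\<rfloor> < D"
proof -
  have "real D * frac t < real D" using frac_lt_1[of t] assms by simp
  then have "\<lfloor>real D * frac t\<rfloor> < int D" by linarith
  then show ?thesis by (simp add: nat_less_iff frac_ge_0)
qed

lemma lincomb_minvecs_eq_0:
  assumes "z \<in> L" "z = (\<Sum>i\<in>A. a i *\<^sub>R u i)" "\<And>i. i \<in> A \<Longrightarrow> u i \<in> minvecs L"
    and "v \<in> minvecs L" "(\<Sum>i\<in>A. \<bar>a i\<bar>) < 1"
  shows "z = 0"
proof -
  have "0 < norm v" using assms(4) by (simp add: minvecs_def)
  have "norm z \<le> (\<Sum>i\<in>A. \<bar>a i\<bar>) * norm v"
    unfolding assms(2) by (rule norm_lincomb_le, rule minvecs_norm_eq[OF assms(3,4)])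
  also have "\<dots> < norm v" using assms(5) \<open>0 < norm v\<close> by simp
  finally show ?thesis using shorter_than_minvec_eq_0[OF assms(4,1)] by blast
qed

text \<open>Reduce a lattice vector modulo \<open>L'\<close> to \<open>\<Sum> t\<^sub>i u\<^sub>i\<close> with \<open>0 \<le> t\<^sub>i < 1\<close> and sort it
  into one of \<open>(d+1)\<^sup>d\<close> cells of the fundamental parallelotope: two lattice vectors in the same cell
  differ by a lattice vector shorter than \<open>u\<^sub>0\<close>, so they lie in the same coset.\<close>
lemma lattice_index_le_power:
  fixes u :: "nat \<Rightarrow> real^'n"
  assumes L: "L = Zspan g CARD('n)" and L': "L' = Zspan b CARD('n)" and "L' \<subseteq> L"
    and u: "indexed_basis u" "\<And>i. i < CARD('n) \<Longrightarrow> u i \<in> L'" "\<And>i. i < CARD('n) \<Longrightarrow> u i \<in> minvecs L"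
  shows "finite ((\<lambda>x. (\<lambda>y. x + y) ` L') ` L) \<and> lattice_index L L' \<le> Suc CARD('n) ^ CARD('n)"
proof -
  define d where "d = CARD('n)"
  define D where "D = Suc d"
  define cell where "cell x = restrict (\<lambda>i. nat \<lfloor>real D * frac (coord u x i)\<rfloor>) {..<d}" for x
  define fl where "fl x = (\<Sum>i<d. of_int \<lfloor>coord u x i\<rfloor> *\<^sub>R u i)" for x
  have fl: "fl x \<in> L'" for x
    unfolding fl_def d_def using u(2) unfolding L' by (intro Zspan_sum) auto
  have same_coset: "(\<lambda>y. x + y) ` L' = (\<lambda>y. x' + y) ` L'"
    if x: "x \<in> L" "x' \<in> L" "cell x = cell x'" for x x'
  proof -
    define a where "a i = frac (coord u x i) - frac (coord u x' i)" for i
    define z where "z = (x - fl x) - (x' - fl x')"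
    have "z \<in> L"
      unfolding z_def using x(1,2) fl[of x] fl[of x'] \<open>L' \<subseteq> L\<close> unfolding L by (blast intro: Zspan_diff)
    have z: "z = (\<Sum>i<d. a i *\<^sub>R u i)"
      unfolding z_def fl_def d_def a_def coord_floor_decomposition[OF u(1)]
      by (simp add: sum_subtractf scaleR_diff_left)
    have a: "\<bar>a i\<bar> < 1 / real D" if "i < d" for i
      using fun_cong[OF x(3), of i] that
      by (auto simp: a_def cell_def D_def frac_ge_0 intro!: nat_floor_scaled_eq_imp_dist)
    have "(\<Sum>i<d. \<bar>a i\<bar>) < (\<Sum>i<d. 1 / real D)"
      by (rule sum_strict_mono) (use a in \<open>auto simp: d_def lessThan_empty_iff\<close>)
    also have "\<dots> \<le> 1" by (simp add: D_def)
    finally have "z = 0"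
      using lincomb_minvecs_eq_0[OF \<open>z \<in> L\<close> z _ u(3)[of 0]] u(3) by (simp add: d_def)
    then have "x - x' = fl x - fl x'" unfolding z_def by (simp add: algebra_simps)
    then show ?thesis
      using Zspan_diff[of "fl x" b _ "fl x'"] fl unfolding L' Zspan_coset_eq_iff by simp
  qed
  have "nat \<lfloor>real D * frac t\<rfloor> < D" for t
    using nat_floor_mult_frac_less[of D t] by (simp add: D_def)
  then have "cell x \<in> PiE {..<d} (\<lambda>_. {..<D})" for x unfolding cell_def restrict_PiE_iff by simp
  then have cells: "cell ` L \<subseteq> PiE {..<d} (\<lambda>_. {..<D})" by blast
  have "finite (PiE {..<d} (\<lambda>_. {..<D}))" by (simp add: finite_PiE)
  from card_image_le_if_factors[OF this cells same_coset]
  have "finite ((\<lambda>x. (\<lambda>y. x + y) ` L') ` L) \<and> lattice_index L L' \<le> card (PiE {..<d} (\<lambda>_. {..<D}))"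
    by (simp only: lattice_index_def)
  then show ?thesis by (simp add: card_PiE D_def d_def)
qed

lemma lattice_index_le_I_dim:
  fixes L L' :: "(real^'n) set"
  assumes "is_lattice L" "is_lattice L'" "L' \<subseteq> L" "well_rounded L'" "minvecs L' \<subseteq> minvecs L"
  shows "lattice_index L L' \<le> I_dim TYPE('n)"
proof -
  let ?P = "\<lambda>N. \<forall>(L :: (real^'n) set) L'.
      is_lattice L \<and> is_lattice L' \<and> L' \<subseteq> L \<and> well_rounded L' \<and> minvecs L' \<subseteq> minvecs L
      \<longrightarrow> lattice_index L L' \<le> N"
  \<comment> \<open>Without a uniform bound the \<open>LEAST\<close> defining \<open>I_dim\<close> would be taken over an empty set.\<close>
  have "?P (Suc CARD('n) ^ CARD('n))"
  proof (intro allI impI)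
    fix L L' :: "(real^'n) set"
    assume h: "is_lattice L \<and> is_lattice L' \<and> L' \<subseteq> L \<and> well_rounded L' \<and> minvecs L' \<subseteq> minvecs L"
    then obtain g b where g: "L = Zspan g CARD('n)" and b: "L' = Zspan b CARD('n)"
      by (auto simp: is_lattice_def is_lattice_basis_def)
    obtain u where u: "indexed_basis u" "\<And>i. i < CARD('n) \<Longrightarrow> u i \<in> minvecs L'"
      using obtain_indexed_basis_in[of "minvecs L'"] h unfolding well_rounded_def by blast
    moreover have "u i \<in> L'" if "i < CARD('n)" for i
      using u(2)[OF that] by (simp add: minvecs_def)
    ultimately show "lattice_index L L' \<le> Suc CARD('n) ^ CARD('n)"
      using lattice_index_le_power[OF g b _ u(1)] h by blast
  qed
  then have "?P (I_dim TYPE('n))" unfolding I_dim_def by (rule LeastI)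
  then show ?thesis using assms by blast
qed

text \<open>With \<open>K = [L : L']\<close>, two of the cosets of \<open>0, x, \<dots>, K x\<close> coincide, so \<open>m x \<in> L'\<close> for some \<open>1 \<le> m \<le> K\<close>.\<close>
lemma fact_lattice_index_scaleR_mem:
  assumes L: "L = Zspan g d" and L': "L' = Zspan b d"
    and fin: "finite ((\<lambda>x. (\<lambda>y. x + y) ` L') ` L)" and x: "x \<in> L"
  shows "real (fact (lattice_index L L')) *\<^sub>R x \<in> L'"
proof -
  define K where "K = lattice_index L L'"
  define \<phi> where "\<phi> a = (\<lambda>y. of_nat a *\<^sub>R x + y) ` L'" for a :: nat
  have "\<phi> ` {0..K} \<subseteq> (\<lambda>x. (\<lambda>y. x + y) ` L') ` L"
  proof (rule image_subsetI)
    fix a assume "a \<in> {0..K}"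
    have "of_int (int a) *\<^sub>R x \<in> L" using Zspan_scaleR_of_int x unfolding L by blast
    then show "\<phi> a \<in> (\<lambda>x. (\<lambda>y. x + y) ` L') ` L" unfolding \<phi>_def by simp
  qed
  then have "card (\<phi> ` {0..K}) \<le> K"
    using card_mono[OF fin] unfolding K_def lattice_index_def by blast
  then have "\<not> inj_on \<phi> {0..K}" using pigeonhole[of \<phi> "{0..K}"] by simp
  then obtain i j where ij: "i \<in> {0..K}" "j \<in> {0..K}" "i < j" "\<phi> i = \<phi> j"
    unfolding inj_on_def by (metis linorder_neqE_nat)
  have "of_nat j *\<^sub>R x - of_nat i *\<^sub>R x \<in> L'"
    using ij(4) unfolding \<phi>_def L' Zspan_coset_eq_iff[symmetric] by simp
  then have diff: "of_nat (j - i) *\<^sub>R x \<in> L'"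
    using ij(3) by (simp add: of_nat_diff scaleR_diff_left)
  have "j - i dvd fact K" using ij by (intro dvd_fact) auto
  then obtain q where q: "fact K = (j - i) * q" by blast
  have "of_int (int q) *\<^sub>R (of_nat (j - i) *\<^sub>R x) \<in> L'"
    using Zspan_scaleR_of_int diff unfolding L' by blast
  moreover have "real (fact K) = of_int (int q) * of_nat (j - i)"
    unfolding q by simp
  ultimately have "real (fact K) *\<^sub>R x \<in> L'" by (simp only: scaleR_scaleR)
  then show ?thesis unfolding K_def .
qed


section \<open>A basis of minimal vectors of maximal determinant\<close>

definition rows_matrix :: "('n::finite \<Rightarrow> nat) \<Rightarrow> (nat \<Rightarrow> real^'n) \<Rightarrow> real^'n^'n" where
  "rows_matrix h w = (\<chi> i. w (h i))"

lemma row_rows_matrix: "row i (rows_matrix h w) = w (h i)"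
  by (simp add: row_def rows_matrix_def vec_eq_iff)

lemma det_rows_matrix_nonzero_iff:
  fixes h :: "'n::finite \<Rightarrow> nat"
  assumes h: "bij_betw h UNIV {..<CARD('n)}"
  shows "det (rows_matrix h w) \<noteq> 0 \<longleftrightarrow> indexed_basis w"
proof -
  have "rows (rows_matrix h w) = w ` range h" by (auto simp: rows_def row_rows_matrix)
  then have rows: "rows (rows_matrix h w) = w ` {..<CARD('n)}" using h by (simp add: bij_betw_def)
  have "det (rows_matrix h w) \<noteq> 0 \<longleftrightarrow> rank (rows_matrix h w) = CARD('n)"
    using det_eq_0_rank[of "rows_matrix h w"] rank_bound[of "rows_matrix h w"] by linarith
  also have "\<dots> \<longleftrightarrow> span (w ` {..<CARD('n)}) = UNIV"
    using dim_eq_full[of "w ` {..<CARD('n)}"] by (simp add: row_rank_def rows)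
  finally show ?thesis by (simp add: indexed_basis_iff_spanning)
qed

lemma det_rows_matrix_update:
  fixes h :: "'n::finite \<Rightarrow> nat"
  assumes h: "bij_betw h UNIV {..<CARD('n)}" and w: "indexed_basis w" and k: "k < CARD('n)"
  shows "det (rows_matrix h (w(k := v))) = coord w v k * det (rows_matrix h w)"
proof -
  define A where "A = rows_matrix h w"
  define x :: "real^'n" where "x = (\<chi> i. coord w v (h i))"
  have "k \<in> range h" using h k by (simp add: bij_betw_def)
  then obtain i0 where i0: "h i0 = k" by blast
  have hk: "h i = k \<longleftrightarrow> i = i0" for i
    using h i0 by (auto simp: bij_betw_def inj_on_def)
  have "v = (\<Sum>l<CARD('n). coord w v l *\<^sub>R w l)"
    by (rule coord_expansion[OF w])
  also have "\<dots> = (\<Sum>i\<in>UNIV. x$i *s row i A)"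
    unfolding A_def x_def row_rows_matrix scalar_mult_eq_scaleR
    using sum.reindex_bij_betw[OF h, of "\<lambda>l. coord w v l *\<^sub>R w l"] by simp
  finally have v: "v = (\<Sum>i\<in>UNIV. x$i *s row i A)" .
  have "rows_matrix h (w(k := v)) = (\<chi> i. if i = i0 then (\<Sum>i\<in>UNIV. x$i *s row i A) else row i A)"
    unfolding rows_matrix_def using v by (intro Cart_lambda_cong) (auto simp: hk A_def row_rows_matrix)
  then show ?thesis
    using cramer_lemma_transpose[where k = i0 and x = x and A = A] i0 by (simp add: A_def x_def)
qed

text \<open>Replacing \<open>w\<^sub>k\<close> by a minimal vector \<open>v\<close> multiplies the determinant by the \<open>k\<close>-th
  coordinate of \<open>v\<close>, so for minimal vectors of maximal \<open>|det|\<close> all these coordinates are at most 1.\<close>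
lemma obtain_minvecs_basis_coord_le_1:
  fixes g :: "nat \<Rightarrow> real^'n"
  assumes g: "indexed_basis g" and L: "L = Zspan g CARD('n)" and wr: "well_rounded L"
  obtains w where "indexed_basis w" "\<And>i. i < CARD('n) \<Longrightarrow> w i \<in> minvecs L"
    "\<And>v k. v \<in> minvecs L \<Longrightarrow> k < CARD('n) \<Longrightarrow> \<bar>coord w v k\<bar> \<le> 1"
proof -
  obtain h :: "'n \<Rightarrow> nat" where h: "bij_betw h UNIV {..<CARD('n)}"
    using ex_bij_betw_finite_nat[of "UNIV :: 'n set"] by (auto simp: atLeast0LessThan)
  define T where "T = PiE {..<CARD('n)} (\<lambda>_. minvecs L)"
  define F where "F x = \<bar>det (rows_matrix h x)\<bar>" for x
  have "finite T" unfolding T_def using finite_minvecs[OF g L] by (simp add: finite_PiE)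
  obtain u where u: "indexed_basis u" "\<And>i. i < CARD('n) \<Longrightarrow> u i \<in> minvecs L"
    using obtain_indexed_basis_in wr unfolding well_rounded_def by blast
  have "rows_matrix h (restrict u {..<CARD('n)}) = rows_matrix h u"
    using h by (auto simp: rows_matrix_def vec_eq_iff bij_betw_def)
  then have uT: "restrict u {..<CARD('n)} \<in> T" "0 < F (restrict u {..<CARD('n)})"
    using u det_rows_matrix_nonzero_iff[OF h] by (auto simp: T_def F_def)
  obtain w where wT: "w \<in> T" and wmax: "\<And>x. x \<in> T \<Longrightarrow> F x \<le> F w"
    using Max_in[of "F ` T"] Max_ge[of "F ` T"] \<open>finite T\<close> uT(1) by fastforce
  have "0 < F w" using wmax[OF uT(1)] uT(2) by linarith
  then have w: "indexed_basis w" using det_rows_matrix_nonzero_iff[OF h] by (simp add: F_def)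
  have "\<bar>coord w v k\<bar> \<le> 1" if v: "v \<in> minvecs L" and k: "k < CARD('n)" for v k
  proof -
    have "w(k := v) \<in> T" using wT k v by (auto simp: T_def PiE_iff extensional_def)
    then have "\<bar>coord w v k\<bar> * F w \<le> 1 * F w"
      using wmax[of "w(k := v)"] det_rows_matrix_update[OF h w k, of v] by (simp add: F_def abs_mult)
    then show ?thesis using \<open>0 < F w\<close> by (simp only: mult_le_cancel_right_pos)
  qed
  moreover have "w i \<in> minvecs L" if "i < CARD('n)" for i using wT that by (auto simp: T_def)
  ultimately show ?thesis using that w by blast
qed

section \<open>The reduced basis\<close>

locale minvecs_frame =
  fixes L :: "(real^'n::finite) set" and g w :: "nat \<Rightarrow> real^'n"
  assumes g: "indexed_basis g" and L_eq: "L = Zspan g CARD('n)" and w: "indexed_basis w"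
    and w_minvecs: "\<And>i. i < CARD('n) \<Longrightarrow> w i \<in> minvecs L"
    and minvecs_coord_le_1: "\<And>v k. v \<in> minvecs L \<Longrightarrow> k < CARD('n) \<Longrightarrow> \<bar>coord w v k\<bar> \<le> 1"
begin

definition M :: "(real^'n) set" where
  "M = Zspan w CARD('n)"

lemma w_in_L: "i < CARD('n) \<Longrightarrow> w i \<in> L"
  using w_minvecs by (simp add: minvecs_def)

lemma L_diff: "x \<in> L \<Longrightarrow> y \<in> L \<Longrightarrow> x - y \<in> L"
  unfolding L_eq by (rule Zspan_diff)

lemma L_scaleR_of_int: "x \<in> L \<Longrightarrow> of_int z *\<^sub>R x \<in> L"
  unfolding L_eq by (rule Zspan_scaleR_of_int)

lemma L_sum: "finite A \<Longrightarrow> (\<And>k. k \<in> A \<Longrightarrow> y k \<in> L) \<Longrightarrow> (\<Sum>k\<in>A. of_int (c k) *\<^sub>R y k) \<in> L"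
  unfolding L_eq by (rule Zspan_sum)

lemma M_subset_L: "M \<subseteq> L"
  unfolding M_def L_eq by (rule Zspan_subset) (use w_in_L L_eq in simp)

lemma w_minvecs_M: "i < CARD('n) \<Longrightarrow> w i \<in> minvecs M"
  using w_minvecs M_subset_L Zspan_generator[of _ _ w] by (auto simp: minvecs_def M_def)

lemma minvecs_M_subset: "minvecs M \<subseteq> minvecs L"
proof
  fix y assume y: "y \<in> minvecs M"
  have w0: "w 0 \<in> minvecs M" "w 0 \<in> minvecs L" using w_minvecs_M w_minvecs by auto
  then have "norm y = norm (w 0)" using minvecs_norm_eq[OF y] by blast
  then show "y \<in> minvecs L" using y w0(2) M_subset_L by (auto simp: minvecs_def)
qed

lemma finite_cosets_M: "finite ((\<lambda>x. (\<lambda>y. x + y) ` M) ` L)"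
  using lattice_index_le_power[OF L_eq M_def M_subset_L w _ w_minvecs] w_minvecs_M
  by (auto simp: minvecs_def)

lemma lattice_index_M_le_I_dim: "lattice_index L M \<le> I_dim TYPE('n)"
proof (rule lattice_index_le_I_dim)
  show "is_lattice L" "is_lattice M"
    using g L_eq w by (auto simp: is_lattice_def is_lattice_basis_iff M_def)
  have "w ` {..<CARD('n)} \<subseteq> minvecs M" using w_minvecs_M by auto
  then show "well_rounded M"
    using span_mono indexed_basis_span[OF w] unfolding well_rounded_def by blast
qed (use M_subset_L minvecs_M_subset in auto)

lemma coord_L_fact_Ints:
  assumes "x \<in> L" "l < CARD('n)"
  shows "real (fact (lattice_index L M)) * coord w x l \<in> \<int>"
  using coord_Zspan_Ints[OF w fact_lattice_index_scaleR_mem[OF L_eq M_def finite_cosets_M assms(1),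
      unfolded M_def] assms(2)]
  by (simp only: coord_scaleR[OF w] M_def)

definition vanish_below :: "nat \<Rightarrow> real^'n \<Rightarrow> bool" where
  "vanish_below j x \<longleftrightarrow> (\<forall>l<j. coord w x l = 0)"

definition pivot_candidates :: "nat \<Rightarrow> real set" where
  "pivot_candidates j = {coord w x j | x. x \<in> L \<and> vanish_below j x \<and> 0 < coord w x j \<and> coord w x j \<le> 1}"

text \<open>The cap \<open>\<le> 1\<close> (attained by \<open>w\<^sub>j\<close>) only serves to make the candidate set finite.\<close>
definition pivot :: "nat \<Rightarrow> real" where
  "pivot j = Min (pivot_candidates j)"

lemma vanish_below_w: "j < CARD('n) \<Longrightarrow> vanish_below j (w j)"
  by (simp add: vanish_below_def coord_basis[OF w])

lemma finite_pivot_candidates: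
  assumes j: "j < CARD('n)"
  shows "finite (pivot_candidates j)"
proof -
  define F :: nat where "F = fact (lattice_index L M)"
  have "pivot_candidates j \<subseteq> (\<lambda>z. of_int z / real F) ` {1..int F}"
  proof
    fix s assume "s \<in> pivot_candidates j"
    then obtain x where x: "x \<in> L" "s = coord w x j" "0 < s" "s \<le> 1"
      unfolding pivot_candidates_def by blast
    obtain z where z: "real F * s = of_int z"
      using coord_L_fact_Ints[OF x(1) j] x(2) Ints_cases unfolding F_def by metis
    have "0 < real F" by (simp add: F_def)
    then have "1 \<le> z" "z \<le> int F" "s = of_int z / real F"
      using z x(3,4) mult_pos_pos[of "real F" s] mult_left_le[of s "real F"]
      by (auto simp: field_simps)
    then show "s \<in> (\<lambda>z. of_int z / real F) ` {1..int F}" by auto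
  qed
  then show ?thesis by (rule finite_subset) simp
qed

lemma one_mem_pivot_candidates: "j < CARD('n) \<Longrightarrow> 1 \<in> pivot_candidates j"
  using vanish_below_w w_in_L coord_basis[OF w] unfolding pivot_candidates_def by fastforce

lemma pivot_mem: "j < CARD('n) \<Longrightarrow> pivot j \<in> pivot_candidates j"
  unfolding pivot_def using finite_pivot_candidates one_mem_pivot_candidates by (intro Min_in) auto

lemma pivot_pos:
  assumes "j < CARD('n)"
  shows "0 < pivot j"
  using pivot_mem[OF assms] by (auto simp: pivot_candidates_def)

lemma pivot_le_coord:
  assumes "j < CARD('n)" "x \<in> L" "vanish_below j x" "0 < coord w x j"
  shows "pivot j \<le> coord w x j"
proof (cases "coord w x j \<le> 1")
  case True
  then have "coord w x j \<in> pivot_candidates j" unfolding pivot_candidates_def using assms by blast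
  then show ?thesis unfolding pivot_def using finite_pivot_candidates[OF assms(1)] by simp
next
  case False
  then show ?thesis using pivot_mem[OF assms(1)] by (auto simp: pivot_candidates_def)
qed

definition pivot_vector :: "nat \<Rightarrow> real^'n" where
  "pivot_vector j = (SOME x. x \<in> L \<and> vanish_below j x \<and> coord w x j = pivot j)"

lemma pivot_vector:
  assumes "j < CARD('n)"
  shows "pivot_vector j \<in> L" "vanish_below j (pivot_vector j)" "coord w (pivot_vector j) j = pivot j"
proof -
  have "\<exists>x. x \<in> L \<and> vanish_below j x \<and> coord w x j = pivot j"
    using pivot_mem[OF assms] unfolding pivot_candidates_def by auto
  then have "pivot_vector j \<in> L \<and> vanish_below j (pivot_vector j) \<and> coord w (pivot_vector j) j = pivot j"
    unfolding pivot_vector_def by (rule someI_ex)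
  then show "pivot_vector j \<in> L" "vanish_below j (pivot_vector j)" "coord w (pivot_vector j) j = pivot j"
    by auto
qed

text \<open>Division with remainder by \<open>pivot j\<close>: the remainder is a smaller admissible coordinate.\<close>
lemma coord_multiple_of_pivot:
  assumes j: "j < CARD('n)" and x: "x \<in> L" "vanish_below j x"
  obtains z where "coord w x j = of_int z * pivot j"
proof -
  define z where "z = \<lfloor>coord w x j / pivot j\<rfloor>"
  define y where "y = x - of_int z *\<^sub>R pivot_vector j"
  have yL: "y \<in> L"
    unfolding y_def using x(1) pivot_vector(1)[OF j] by (intro L_diff L_scaleR_of_int)
  have yv: "vanish_below j y"
    using x(2) pivot_vector(2)[OF j]
    by (simp add: vanish_below_def y_def coord_diff[OF w] coord_scaleR[OF w])
  have cy: "coord w y j = coord w x j - of_int z * pivot j"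
    using pivot_vector(3)[OF j] by (simp add: y_def coord_diff[OF w] coord_scaleR[OF w])
  have "of_int z \<le> coord w x j / pivot j" "coord w x j / pivot j < of_int z + 1"
    unfolding z_def by linarith+
  then have lo: "0 \<le> coord w y j" and hi: "coord w y j < pivot j"
    unfolding cy using pivot_pos[OF j] by (simp_all add: field_simps)
  have "coord w y j = 0"
  proof (rule ccontr)
    assume "coord w y j \<noteq> 0"
    then have "pivot j \<le> coord w y j" using lo pivot_le_coord[OF j yL yv] by simp
    then show False using hi by simp
  qed
  then have "coord w x j = of_int z * pivot j" using cy by simp
  then show ?thesis by (rule that)
qed

definition pivot_denom :: "nat \<Rightarrow> int" where
  "pivot_denom j = \<lfloor>1 / pivot j\<rfloor>"

lemma pivot_denom:
  assumes j: "j < CARD('n)"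
  shows "of_int (pivot_denom j) * pivot j = 1" "1 \<le> pivot_denom j"
proof -
  obtain z where "coord w (w j) j = of_int z * pivot j"
    using coord_multiple_of_pivot[OF j w_in_L[OF j] vanish_below_w[OF j]] .
  then have z: "of_int z * pivot j = 1" using j by (simp add: coord_basis[OF w])
  then have "of_int z = 1 / pivot j" using pivot_pos[OF j] by (simp add: eq_divide_eq)
  then have "pivot_denom j = z" unfolding pivot_denom_def by (metis floor_of_int)
  moreover have "0 < of_int z * pivot j" using z by simp
  then have "(0::real) < of_int z" using pivot_pos[OF j] by (simp add: zero_less_mult_iff)
  ultimately show "of_int (pivot_denom j) * pivot j = 1" "1 \<le> pivot_denom j" using z by simp_all
qed

definition reduced_basis :: "nat \<Rightarrow> real^'n" where
  "reduced_basis j = pivot_vector j - (\<Sum>l\<in>{j<..<CARD('n)}. of_int \<lfloor>coord w (pivot_vector j) l\<rfloor> *\<^sub>R w l)"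

lemma reduced_basis_in_L: "j < CARD('n) \<Longrightarrow> reduced_basis j \<in> L"
  unfolding reduced_basis_def using pivot_vector(1) w_in_L by (intro L_diff L_sum) auto

lemma coord_reduced_basis:
  assumes "j < CARD('n)" "l < CARD('n)"
  shows "coord w (reduced_basis j) l =
    coord w (pivot_vector j) l - (if j < l then of_int \<lfloor>coord w (pivot_vector j) l\<rfloor> else 0)"
  unfolding reduced_basis_def coord_diff[OF w] using assms
  by (subst coord_sum_basis[OF w]) auto

lemma coord_reduced_basis_below: "j < CARD('n) \<Longrightarrow> l < j \<Longrightarrow> coord w (reduced_basis j) l = 0"
  using pivot_vector(2) by (simp add: coord_reduced_basis vanish_below_def)

lemma coord_reduced_basis_diag: "j < CARD('n) \<Longrightarrow> coord w (reduced_basis j) j = pivot j"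
  using pivot_vector(3) by (simp add: coord_reduced_basis)

lemma coord_reduced_basis_above:
  assumes "j < l" "l < CARD('n)"
  shows "0 \<le> coord w (reduced_basis j) l \<and> coord w (reduced_basis j) l < 1"
  using assms by (simp add: coord_reduced_basis) linarith

lemma coord_reduced_lincomb:
  assumes j: "j < CARD('n)"
  shows "coord w (\<Sum>k<CARD('n). of_int (c k) *\<^sub>R reduced_basis k) j =
    (\<Sum>k<j. of_int (c k) * coord w (reduced_basis k) j) + of_int (c j) * pivot j"
proof -
  have "coord w (\<Sum>k<CARD('n). of_int (c k) *\<^sub>R reduced_basis k) j
      = (\<Sum>k<CARD('n). of_int (c k) * coord w (reduced_basis k) j)"
    by (rule coord_lincomb[OF w])
  also have "\<dots> = (\<Sum>k<Suc j. of_int (c k) * coord w (reduced_basis k) j)"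
    using j by (intro sum.mono_neutral_right) (auto simp: coord_reduced_basis_below)
  finally show ?thesis using j by (simp add: coord_reduced_basis_diag)
qed

lemma vanish_below_subset_Zspan_reduced_basis:
  assumes "j \<le> CARD('n)"
  shows "{x \<in> L. vanish_below j x} \<subseteq> Zspan reduced_basis CARD('n)"
  using assms
proof (induction j rule: inc_induct)
  case base
  show ?case using coords_zero_imp_zero[OF w] Zspan_zero by (auto simp: vanish_below_def)
next
  case (step j)
  show ?case
  proof safe
    fix x assume x: "x \<in> L" "vanish_below j x"
    obtain z where z: "coord w x j = of_int z * pivot j"
      using coord_multiple_of_pivot[OF step.hyps(2) x] .
    define y where "y = x - of_int z *\<^sub>R reduced_basis j"
    have "y \<in> L"
      unfolding y_def using x(1) reduced_basis_in_L[OF step.hyps(2)] by (intro L_diff L_scaleR_of_int)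
    moreover have "vanish_below (Suc j) y"
      using x(2) z step.hyps(2) coord_reduced_basis_below coord_reduced_basis_diag
      by (auto simp: vanish_below_def y_def coord_diff[OF w] coord_scaleR[OF w] less_Suc_eq)
    ultimately have "y \<in> Zspan reduced_basis CARD('n)" using step.IH by blast
    then have "y + of_int z *\<^sub>R reduced_basis j \<in> Zspan reduced_basis CARD('n)"
      by (intro Zspan_add Zspan_scaleR_of_int Zspan_generator step.hyps(2))
    then show "x \<in> Zspan reduced_basis CARD('n)" by (simp add: y_def)
  qed
qed

lemma L_eq_Zspan_reduced_basis: "L = Zspan reduced_basis CARD('n)"
proof
  show "L \<subseteq> Zspan reduced_basis CARD('n)"
    using vanish_below_subset_Zspan_reduced_basis[of 0] by (auto simp: vanish_below_def)
  show "Zspan reduced_basis CARD('n) \<subseteq> L"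
    unfolding L_eq by (rule Zspan_subset) (use reduced_basis_in_L L_eq in simp)
qed

lemma is_lattice_basis_reduced_basis: "is_lattice_basis L reduced_basis"
proof -
  have "w ` {..<CARD('n)} \<subseteq> span (reduced_basis ` {..<CARD('n)})"
    using w_in_L L_eq_Zspan_reduced_basis Zspan_subset_span[of reduced_basis "CARD('n)"] by auto
  then have "span (w ` {..<CARD('n)}) \<subseteq> span (reduced_basis ` {..<CARD('n)})"
    by (rule span_minimal) (rule subspace_span)
  then have "span (reduced_basis ` {..<CARD('n)}) = UNIV"
    using indexed_basis_span[OF w] by blast
  then show ?thesis
    using L_eq_Zspan_reduced_basis by (simp add: is_lattice_basis_iff indexed_basis_iff_spanning)
qed

text \<open>Triangularity: a combination of the \<open>f\<^sub>k\<close> lies in \<open>M\<close> only if each coefficient is a multiple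
  of the corresponding \<open>pivot_denom\<close>, as its coordinates are determined one by one.\<close>
lemma reduced_lincomb_in_M_eq_0:
  assumes M: "(\<Sum>k<CARD('n). of_int (c k) *\<^sub>R reduced_basis k) \<in> M"
    and c: "\<And>k. k < CARD('n) \<Longrightarrow> \<bar>c k\<bar> < pivot_denom k"
  shows "k < CARD('n) \<Longrightarrow> c k = 0"
proof (induction k rule: less_induct)
  case (less k)
  obtain z where z: "coord w (\<Sum>k<CARD('n). of_int (c k) *\<^sub>R reduced_basis k) k = of_int z"
    using coord_Zspan_Ints[OF w M[unfolded M_def] less.prems] Ints_cases by metis
  have "(\<Sum>m<k. of_int (c m) * coord w (reduced_basis m) k) = 0"
    using less.IH less.prems by (intro sum.neutral) auto
  then have ck_pivot: "of_int (c k) * pivot k = of_int z"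
    using coord_reduced_lincomb[OF less.prems, of c] z by simp
  have "(of_int (c k) :: real) = of_int (c k) * (pivot k * of_int (pivot_denom k))"
    using pivot_denom(1)[OF less.prems] by (simp add: mult.commute)
  also have "\<dots> = of_int z * of_int (pivot_denom k)"
    using ck_pivot by (metis mult.assoc)
  finally have ck: "c k = z * pivot_denom k" by (metis of_int_eq_iff of_int_mult)
  have "\<bar>z\<bar> * pivot_denom k < 1 * pivot_denom k"
    using c[OF less.prems] pivot_denom(2)[OF less.prems] by (simp add: ck abs_mult)
  then have "z = 0" using pivot_denom(2)[OF less.prems] by (simp only: mult_less_cancel_right) auto
  then show ?case by (simp add: ck)
qed

lemma prod_pivot_denom_le_lattice_index: "(\<Prod>k<CARD('n). pivot_denom k) \<le> int (lattice_index L M)"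
proof -
  define T where "T = PiE {..<CARD('n)} (\<lambda>k. {0..<pivot_denom k})"
  define X where "X t = (\<Sum>k<CARD('n). of_int (t k) *\<^sub>R reduced_basis k)" for t :: "nat \<Rightarrow> int"
  define \<psi> where "\<psi> t = (\<lambda>y. X t + y) ` M" for t
  have "X t \<in> L" for t unfolding X_def by (intro L_sum reduced_basis_in_L) auto
  then have sub: "\<psi> ` T \<subseteq> (\<lambda>x. (\<lambda>y. x + y) ` M) ` L" unfolding \<psi>_def by blast
  have inj: "inj_on \<psi> T"
  proof (rule inj_onI)
    fix t s assume t: "t \<in> T" and s: "s \<in> T" and "\<psi> t = \<psi> s"
    then have "X t - X s \<in> M" unfolding \<psi>_def M_def Zspan_coset_eq_iff by simp
    moreover have "X t - X s = (\<Sum>k<CARD('n). of_int (t k - s k) *\<^sub>R reduced_basis k)"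
      unfolding X_def by (simp add: sum_subtractf scaleR_diff_left)
    ultimately have M: "(\<Sum>k<CARD('n). of_int (t k - s k) *\<^sub>R reduced_basis k) \<in> M" by simp
    have lt: "\<bar>t k - s k\<bar> < pivot_denom k" if "k < CARD('n)" for k
    proof -
      have "t k \<in> {0..<pivot_denom k}" "s k \<in> {0..<pivot_denom k}"
        using t s that by (auto simp: T_def PiE_iff)
      then show ?thesis by auto
    qed
    have "t k - s k = 0" if "k < CARD('n)" for k
      using reduced_lincomb_in_M_eq_0[of "\<lambda>k. t k - s k", OF M lt that] .
    then show "t = s" using t s unfolding T_def by (intro PiE_ext) auto
  qed
  have "card T = card (\<psi> ` T)" using card_image[OF inj] by simp
  also have "\<dots> \<le> lattice_index L M"
    unfolding lattice_index_def by (rule card_mono[OF finite_cosets_M sub])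
  finally have "int (card T) \<le> int (lattice_index L M)" by simp
  moreover have "int (card T) = (\<Prod>k<CARD('n). int (nat (pivot_denom k)))"
    by (simp add: T_def card_PiE of_nat_prod)
  moreover have "\<dots> = (\<Prod>k<CARD('n). pivot_denom k)"
  proof (rule prod.cong)
    fix k assume "k \<in> {..<CARD('n)}"
    then have "1 \<le> pivot_denom k" by (simp add: pivot_denom(2))
    then show "int (nat (pivot_denom k)) = pivot_denom k" by simp
  qed simp
  ultimately show ?thesis by linarith
qed

lemma prod_pivot_denom_mono:
  assumes "i \<le> j" "j \<le> CARD('n)"
  shows "(\<Prod>m<i. pivot_denom m) \<le> (\<Prod>m<j. pivot_denom m)"
proof (rule prod_mono2)
  show "1 \<le> pivot_denom b" if "b \<in> {..<j} - {..<i}" for b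
    using that assms pivot_denom(2)[of b] by simp
  show "0 \<le> pivot_denom a" if "a \<in> {..<i}" for a
    using that assms pivot_denom(2)[of a] by simp
qed (use assms in auto)

lemma sum_lessThan_power2_int: "(\<Sum>k<j. (2::int) ^ k) = 2 ^ j - 1"
  by (induction j) simp_all

text \<open>The \<open>j\<close>-th coordinate of a minimal vector \<open>\<Sum> \<beta>\<^sub>k f\<^sub>k\<close> is at most 1 in absolute value and equals
  \<open>\<beta>\<^sub>j / pivot_denom j\<close> plus a combination of the \<open>\<beta>\<^sub>k\<close>, \<open>k < j\<close>, with coefficients in \<open>[0, 1)\<close>.\<close>
lemma minvec_coeff_le_step:
  assumes v: "v \<in> minvecs L" "v = (\<Sum>i<CARD('n). of_int (\<beta> i) *\<^sub>R reduced_basis i)" and j: "j < CARD('n)"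
  shows "\<bar>\<beta> j\<bar> \<le> pivot_denom j * (1 + (\<Sum>k<j. \<bar>\<beta> k\<bar>))"
proof -
  define S where "S = (\<Sum>k<j. of_int (\<beta> k) * coord w (reduced_basis k) j)"
  define B where "B = (\<Sum>k<j. \<bar>real_of_int (\<beta> k)\<bar>)"
  have "\<bar>S\<bar> \<le> (\<Sum>k<j. \<bar>of_int (\<beta> k) * coord w (reduced_basis k) j\<bar>)"
    unfolding S_def by (rule sum_abs)
  also have "\<dots> \<le> B"
    unfolding B_def
  proof (rule sum_mono)
    fix k assume "k \<in> {..<j}"
    then have "\<bar>coord w (reduced_basis k) j\<bar> \<le> 1" using coord_reduced_basis_above[of k j] j by auto
    then show "\<bar>of_int (\<beta> k) * coord w (reduced_basis k) j\<bar> \<le> \<bar>real_of_int (\<beta> k)\<bar>"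
      by (simp add: abs_mult mult_left_le)
  qed
  finally have "\<bar>S\<bar> \<le> B" .
  moreover have "coord w v j = S + of_int (\<beta> j) * pivot j"
    using coord_reduced_lincomb[OF j, of \<beta>] v(2) by (simp add: S_def)
  moreover have "\<bar>coord w v j\<bar> \<le> 1" using minvecs_coord_le_1[OF v(1) j] .
  ultimately have "\<bar>of_int (\<beta> j) * pivot j\<bar> \<le> 1 + B" by linarith
  then have le: "\<bar>real_of_int (\<beta> j)\<bar> * pivot j \<le> 1 + B"
    using pivot_pos[OF j] by (simp add: abs_mult)
  have "\<bar>real_of_int (\<beta> j)\<bar> = (\<bar>real_of_int (\<beta> j)\<bar> * pivot j) * of_int (pivot_denom j)"
    using pivot_denom(1)[OF j] by (simp add: algebra_simps)
  also have "\<dots> \<le> (1 + B) * of_int (pivot_denom j)"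
    using le pivot_denom(2)[OF j] by (intro mult_right_mono) auto
  finally have "real_of_int \<bar>\<beta> j\<bar> \<le> real_of_int (pivot_denom j * (1 + (\<Sum>k<j. \<bar>\<beta> k\<bar>)))"
    by (simp add: B_def algebra_simps)
  then show ?thesis by (simp only: of_int_le_iff)
qed

lemma minvec_coeff_le_prod:
  assumes v: "v \<in> minvecs L" "v = (\<Sum>i<CARD('n). of_int (\<beta> i) *\<^sub>R reduced_basis i)"
  shows "j < CARD('n) \<Longrightarrow> \<bar>\<beta> j\<bar> \<le> 2 ^ j * (\<Prod>m<Suc j. pivot_denom m)"
proof (induction j rule: less_induct)
  case (less j)
  define P where "P = (\<Prod>m<j. pivot_denom m)"
  have "1 \<le> P" unfolding P_def using less.prems pivot_denom(2) by (auto intro: prod_ge_1)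
  have "(\<Sum>k<j. \<bar>\<beta> k\<bar>) \<le> (\<Sum>k<j. 2 ^ k * P)"
  proof (rule sum_mono)
    fix k assume k: "k \<in> {..<j}"
    have "(\<Prod>m<Suc k. pivot_denom m) \<le> P"
      unfolding P_def using k less.prems by (intro prod_pivot_denom_mono) auto
    then show "\<bar>\<beta> k\<bar> \<le> 2 ^ k * P"
      using less.IH[of k] k less.prems by (auto intro: order_trans mult_left_mono)
  qed
  also have "\<dots> = (2 ^ j - 1) * P" by (simp add: sum_distrib_right[symmetric] sum_lessThan_power2_int)
  finally have sum_le: "1 + (\<Sum>k<j. \<bar>\<beta> k\<bar>) \<le> P + (2 ^ j - 1) * P" using \<open>1 \<le> P\<close> by linarith
  have "\<bar>\<beta> j\<bar> \<le> pivot_denom j * (1 + (\<Sum>k<j. \<bar>\<beta> k\<bar>))"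
    by (rule minvec_coeff_le_step[OF v less.prems])
  also have "\<dots> \<le> pivot_denom j * (P + (2 ^ j - 1) * P)"
    using sum_le pivot_denom(2)[OF less.prems] by (intro mult_left_mono) auto
  also have "\<dots> = 2 ^ j * (\<Prod>m<Suc j. pivot_denom m)"
    by (simp add: P_def algebra_simps)
  finally show ?case .
qed

lemma minvec_coeff_le_I_dim:
  assumes "v \<in> minvecs L" "v = (\<Sum>i<CARD('n). of_int (\<beta> i) *\<^sub>R reduced_basis i)" "j < CARD('n)"
  shows "\<bar>\<beta> j\<bar> \<le> 2 ^ j * int (I_dim TYPE('n))"
proof -
  have "\<bar>\<beta> j\<bar> \<le> 2 ^ j * (\<Prod>m<Suc j. pivot_denom m)"
    using minvec_coeff_le_prod assms by blast
  also have "(\<Prod>m<Suc j. pivot_denom m) \<le> (\<Prod>m<CARD('n). pivot_denom m)"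
    using assms(3) by (intro prod_pivot_denom_mono) auto
  also have "\<dots> \<le> int (I_dim TYPE('n))"
    using prod_pivot_denom_le_lattice_index lattice_index_M_le_I_dim by linarith
  finally show ?thesis by simp
qed

end

theorem theorem17p1:
  fixes L :: "(real^'n) set"
  assumes "is_lattice L" and "perfect L"
  shows "\<exists>f. is_lattice_basis L f \<and>
           (\<forall>v\<in>minvecs L. \<forall>\<beta> :: nat \<Rightarrow> int.
              v = (\<Sum>i<CARD('n). of_int (\<beta> i) *\<^sub>R f i) \<longrightarrow>
              (\<forall>i<CARD('n). \<bar>\<beta> i\<bar> \<le> 2 ^ i * int (I_dim TYPE('n))))"
proof -
  obtain g where "is_lattice_basis L g" using assms(1) unfolding is_lattice_def by blast
  then have g: "indexed_basis g" and L: "L = Zspan g CARD('n)" by (auto simp: is_lattice_basis_iff)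
  obtain w where "indexed_basis w" "\<And>i. i < CARD('n) \<Longrightarrow> w i \<in> minvecs L"
    "\<And>v k. v \<in> minvecs L \<Longrightarrow> k < CARD('n) \<Longrightarrow> \<bar>coord w v k\<bar> \<le> 1"
    using obtain_minvecs_basis_coord_le_1[OF g L perfect_imp_well_rounded[OF assms(2)]] by blast
  then interpret minvecs_frame L g w
    using g L by unfold_locales
  show ?thesis
    using is_lattice_basis_reduced_basis minvec_coeff_le_I_dim by blast
qed

end
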